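(* $\mathrm{para}\text{-}\mathrm{LOGCFL}/\mathrm{poly}\cap\mathrm{PHSP}\subseteq\mathrm{para}\text{-}\mathrm{LOGDCFL}/\mathrm{poly}$ if and only if $\mathrm{LOGCFL}/\mathrm{poly}\subseteq\mathrm{LOGDCFL}/\mathrm{poly}$.
   Context: $\mathrm{FL}/\mathrm{poly}$: functions computable by a deterministic Turing machine with read-only input tape, read-only two-way advice tape holding $h(|x|)$ for an arbitrary advice function $h$ with $|h(n)|\le n^{O(1)}$, work tape and write-once output tape, in polynomial time with $O(\log|x|)$ work space. $\mathrm{LOGCFL}/\mathrm{poly}$ (resp. $\mathrm{LOGDCFL}/\mathrm{poly}$): languages $L$ with $x\in L\iff f(x)\in B$ for some $f\in\mathrm{FL}/\mathrm{poly}$ and some context-free (resp. deterministic context-free) $B$. A parameterized decision problem is a pair $(L,m)$ with $L\subseteq\Sigma^*$ and size parameter $m:\Sigma^*\to\mathbb{N}$. $(f,m)\in\mathrm{para}\text{-}\mathrm{FL}/\mathrm{poly}$ if $m$ is logarithmic-space computable ($x\mapsto1^{m(x)}$ computable in polynomial time with logarithmic work space) and there are an advised deterministic Turing machine $M$, an advice function $h$ and a polynomial $p$ with $|h(|x|)|\le p(m(x)|x|)$ such that $M$ on input $x$ with advice $h(|x|)$ outputs $f(x)$ within time $p(m(x)|x|)$ using space $O(\log(m(x)|x|))$. $\mathrm{para}\text{-}\mathrm{LOGCFL}/\mathrm{poly}$ (resp. $\mathrm{para}\text{-}\mathrm{LOGDCFL}/\mathrm{poly}$): the $(L,m)$ such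 that for some $f$ with $(f,m)\in\mathrm{para}\text{-}\mathrm{FL}/\mathrm{poly}$ and a context-free (resp. deterministic context-free) $A$, $L=\{x\mid f(x)\in A\}$. $\mathrm{PHSP}$ is the collection of parameterized decision problems $(L,m)$ whose size parameter $m$ is polynomially honest: $|x|\le p(m(x))$ for some polynomial $p$ and all $x$. *)

theory Defs
  imports Complex_Main
begin

text \<open>Symbols are natural numbers; an alphabet is a finite set of naturals;
  a string over Sigma is an element of lists Sigma.  A (parameterized) problem
  carries its alphabet explicitly.\<close>

definition poly_bd :: "nat \<Rightarrow> nat \<Rightarrow> nat" where
  "poly_bd k n = n ^ k + k"

text \<open>Read-only two-way input tape (with end markers), read-only two-way
  advice tape (with end markers), one read/write work tape (one-way infinite),
  write-once output tape.\<close>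

datatype sym = Blk | LM | RM | Sym nat

datatype dir = Lft | Stay | Rgt

record tm =
  states :: "nat set"
  alph :: "nat set"
  start :: nat
  halt :: nat
  delta :: "nat \<Rightarrow> sym \<Rightarrow> sym \<Rightarrow> sym \<Rightarrow> nat \<times> dir \<times> dir \<times> sym \<times> dir \<times> nat option"

definition tm_syms :: "tm \<Rightarrow> sym set" where
  "tm_syms M = {Blk, LM, RM} \<union> Sym ` alph M"

definition wf_tm :: "tm \<Rightarrow> bool" where
  "wf_tm M \<longleftrightarrow> finite (states M) \<and> finite (alph M) \<and>
     start M \<in> states M \<and> halt M \<in> states M \<and>
     (\<forall>q\<in>states M. \<forall>a\<in>tm_syms M. \<forall>b\<in>tm_syms M. \<forall>c\<in>tm_syms M.
        (case delta M q a b c of (q', di, da, w, dw, oo) \<Rightarrow>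
           q' \<in> states M \<and> w \<in> insert Blk (Sym ` alph M) \<and> set_option oo \<subseteq> alph M))"

record conf =
  st :: nat
  ipos :: nat
  apos :: nat
  wtape :: "nat \<Rightarrow> sym"
  wpos :: nat
  outp :: "nat list"

definition rd :: "nat list \<Rightarrow> nat \<Rightarrow> sym" where
  "rd x i = (if i = 0 then LM else if i \<le> length x then Sym (x ! (i - 1)) else RM)"

fun mv :: "dir \<Rightarrow> nat \<Rightarrow> nat" where
  "mv Lft i = i - 1"
| "mv Stay i = i"
| "mv Rgt i = Suc i"

definition init_conf :: "tm \<Rightarrow> conf" where
  "init_conf M = \<lparr>st = start M, ipos = 0, apos = 0, wtape = (\<lambda>_. Blk), wpos = 0, outp = []\<rparr>"

definition step :: "tm \<Rightarrow> nat list \<Rightarrow> nat list \<Rightarrow> conf \<Rightarrow> conf" where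
  "step M x a c =
     (if st c = halt M then c else
      (case delta M (st c) (rd x (ipos c)) (rd a (apos c)) (wtape c (wpos c)) of
         (q', di, da, w, dw, oo) \<Rightarrow>
           \<lparr>st = q',
            ipos = min (mv di (ipos c)) (length x + 1),
            apos = min (mv da (apos c)) (length a + 1),
            wtape = (wtape c)(wpos c := w),
            wpos = mv dw (wpos c),
            outp = outp c @ (case oo of None \<Rightarrow> [] | Some s \<Rightarrow> [s])\<rparr>))"

definition run :: "tm \<Rightarrow> nat list \<Rightarrow> nat list \<Rightarrow> nat \<Rightarrow> conf" where
  "run M x a t = (step M x a ^^ t) (init_conf M)"

definition computes_within ::
  "tm \<Rightarrow> nat list \<Rightarrow> nat list \<Rightarrow> nat list \<Rightarrow> nat \<Rightarrow> real \<Rightarrow> bool" where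
  "computes_within M x a y T S \<longleftrightarrow>
     (\<exists>t\<le>T. st (run M x a t) = halt M \<and> outp (run M x a t) = y \<and>
        (\<forall>s\<le>t. real (wpos (run M x a s) + 1) \<le> S))"

definition FL_poly :: "nat set \<Rightarrow> (nat list \<Rightarrow> nat list) \<Rightarrow> bool" where
  "FL_poly \<Sigma> f \<longleftrightarrow>
     (\<exists>M h k c. wf_tm M \<and> \<Sigma> \<subseteq> alph M \<and>
        (\<forall>n. set (h n) \<subseteq> alph M \<and> length (h n) \<le> poly_bd k n) \<and>
        (\<forall>x\<in>lists \<Sigma>. computes_within M x (h (length x)) (f x)
            (poly_bd k (length x)) (c * log 2 (real (length x) + 2))))"

definition logspace_computable :: "nat set \<Rightarrow> (nat list \<Rightarrow> nat) \<Rightarrow> bool" where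
  "logspace_computable \<Sigma> m \<longleftrightarrow>
     (\<exists>M k c. wf_tm M \<and> \<Sigma> \<subseteq> alph M \<and>
        (\<forall>x\<in>lists \<Sigma>. computes_within M x [] (replicate (m x) 1)
            (poly_bd k (length x)) (c * log 2 (real (length x) + 2))))"

definition para_FL_poly :: "nat set \<Rightarrow> (nat list \<Rightarrow> nat list) \<Rightarrow> (nat list \<Rightarrow> nat) \<Rightarrow> bool" where
  "para_FL_poly \<Sigma> f m \<longleftrightarrow> logspace_computable \<Sigma> m \<and>
     (\<exists>M h k c. wf_tm M \<and> \<Sigma> \<subseteq> alph M \<and>
        (\<forall>n. set (h n) \<subseteq> alph M) \<and>
        (\<forall>x\<in>lists \<Sigma>. length (h (length x)) \<le> poly_bd k (m x * length x) \<and>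
            computes_within M x (h (length x)) (f x)
              (poly_bd k (m x * length x)) (c * log 2 (real (m x * length x) + 2))))"

text \<open>A context-free grammar: finite set of productions A -> alpha, where
  nonterminals are Inl n and terminals Inr a; plus a start nonterminal.\<close>
record cfg =
  prods :: "(nat \<times> (nat + nat) list) set"
  gstart :: nat

inductive derives1 :: "cfg \<Rightarrow> (nat + nat) list \<Rightarrow> (nat + nat) list \<Rightarrow> bool" for G where
  "(A, \<alpha>) \<in> prods G \<Longrightarrow> derives1 G (u @ [Inl A] @ v) (u @ \<alpha> @ v)"

definition cfg_lang :: "cfg \<Rightarrow> nat list set" where
  "cfg_lang G = {w. (derives1 G)\<^sup>*\<^sup>* [Inl (gstart G)] (map Inr w)}"

definition is_cfl :: "nat list set \<Rightarrow> bool" where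
  "is_cfl B \<longleftrightarrow> (\<exists>G. finite (prods G) \<and> B = cfg_lang G)"

record dpda =
  pstates :: "nat set"
  pinp :: "nat set"
  pstk :: "nat set"
  pstart :: nat
  pbottom :: nat
  pfinal :: "nat set"
  ptrans :: "nat \<Rightarrow> nat option \<Rightarrow> nat \<Rightarrow> (nat \<times> nat list) option"

definition wf_dpda :: "dpda \<Rightarrow> bool" where
  "wf_dpda P \<longleftrightarrow> finite (pstates P) \<and> finite (pinp P) \<and> finite (pstk P) \<and>
     pstart P \<in> pstates P \<and> pbottom P \<in> pstk P \<and> pfinal P \<subseteq> pstates P \<and>
     (\<forall>q a Z p \<beta>. ptrans P q a Z = Some (p, \<beta>) \<longrightarrow>
        q \<in> pstates P \<and> set_option a \<subseteq> pinp P \<and> Z \<in> pstk P \<and>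
        p \<in> pstates P \<and> set \<beta> \<subseteq> pstk P) \<and>
     (\<forall>q Z. ptrans P q None Z \<noteq> None \<longrightarrow> (\<forall>a. ptrans P q (Some a) Z = None))"

inductive dstep :: "dpda \<Rightarrow> nat \<times> nat list \<times> nat list \<Rightarrow> nat \<times> nat list \<times> nat list \<Rightarrow> bool"
  for P where
  read: "ptrans P q (Some a) Z = Some (p, \<beta>) \<Longrightarrow> dstep P (q, a # w, Z # \<gamma>) (p, w, \<beta> @ \<gamma>)"
| eps: "ptrans P q None Z = Some (p, \<beta>) \<Longrightarrow> dstep P (q, w, Z # \<gamma>) (p, w, \<beta> @ \<gamma>)"

definition dpda_lang :: "dpda \<Rightarrow> nat list set" where
  "dpda_lang P = {w \<in> lists (pinp P). \<exists>q \<gamma>. q \<in> pfinal P \<and>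
      (dstep P)\<^sup>*\<^sup>* (pstart P, w, [pbottom P]) (q, [], \<gamma>)}"

definition is_dcfl :: "nat list set \<Rightarrow> bool" where
  "is_dcfl B \<longleftrightarrow> (\<exists>P. wf_dpda P \<and> B = dpda_lang P)"

definition LOGCFL_poly :: "(nat set \<times> nat list set) set" where
  "LOGCFL_poly = {(\<Sigma>, L). finite \<Sigma> \<and> L \<subseteq> lists \<Sigma> \<and>
      (\<exists>f B. FL_poly \<Sigma> f \<and> is_cfl B \<and> (\<forall>x\<in>lists \<Sigma>. x \<in> L \<longleftrightarrow> f x \<in> B))}"

definition LOGDCFL_poly :: "(nat set \<times> nat list set) set" where
  "LOGDCFL_poly = {(\<Sigma>, L). finite \<Sigma> \<and> L \<subseteq> lists \<Sigma> \<and>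
      (\<exists>f B. FL_poly \<Sigma> f \<and> is_dcfl B \<and> (\<forall>x\<in>lists \<Sigma>. x \<in> L \<longleftrightarrow> f x \<in> B))}"

text \<open>A parameterized decision problem is (Sigma, L, m) with m the size parameter.\<close>
definition para_LOGCFL_poly :: "(nat set \<times> nat list set \<times> (nat list \<Rightarrow> nat)) set" where
  "para_LOGCFL_poly = {(\<Sigma>, L, m). finite \<Sigma> \<and> L \<subseteq> lists \<Sigma> \<and>
      (\<exists>f B. para_FL_poly \<Sigma> f m \<and> is_cfl B \<and> L = {x \<in> lists \<Sigma>. f x \<in> B})}"

definition para_LOGDCFL_poly :: "(nat set \<times> nat list set \<times> (nat list \<Rightarrow> nat)) set" where
  "para_LOGDCFL_poly = {(\<Sigma>, L, m). finite \<Sigma> \<and> L \<subseteq> lists \<Sigma> \<and>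
      (\<exists>f B. para_FL_poly \<Sigma> f m \<and> is_dcfl B \<and> L = {x \<in> lists \<Sigma>. f x \<in> B})}"

definition PHSP :: "(nat set \<times> nat list set \<times> (nat list \<Rightarrow> nat)) set" where
  "PHSP = {(\<Sigma>, L, m). \<exists>k. \<forall>x\<in>lists \<Sigma>. length x \<le> poly_bd k (m x)}"

end

theory Submission
  imports Defs
begin

text \<open>A logspace-computable size parameter is bounded polynomially in the input length, since
  a machine writes at most one output symbol per step; a polynomially honest one bounds the input
  length polynomially in itself. On PHSP the resource bounds poly(m(x)|x|), log(m(x)|x|) and
  poly(|x|), log |x| therefore bound each other, so para-FL/poly and FL/poly reductions coincide
  there. Conversely, taking the size parameter m(x) = |x|, which is logspace computable and
  polynomially honest, embeds LOGCFL/poly into para-LOGCFL/poly \<inter> PHSP.\<close>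

lemma poly_bd_mono:
  assumes "k \<le> K" and "n \<le> n'"
  shows "poly_bd k n \<le> poly_bd K n'"
proof (cases "n' = 0")
  case True
  then have "n = 0" using assms(2) by simp
  have "(0::nat) ^ k \<le> 0 ^ K + (K - k)"
    using assms(1) by (cases "k = K") (auto simp: power_0_left)
  then show ?thesis using True \<open>n = 0\<close> assms(1) by (simp add: poly_bd_def)
next
  case False
  have "n ^ k \<le> n' ^ k" using assms(2) by (rule power_mono) simp
  also have "\<dots> \<le> n' ^ K" using False assms(1) by (intro power_increasing) auto
  finally show ?thesis using assms(1) by (simp add: poly_bd_def)
qed

lemma poly_bd_zero_le: "poly_bd j 0 \<le> j + 1"
  by (cases j) (simp_all add: poly_bd_def)

lemma poly_bd_le_power: "poly_bd j n \<le> (n + 2) ^ (j + 1)"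
proof -
  have "j \<le> 2 ^ j" by (simp add: less_imp_le less_exp)
  also have "(2::nat) ^ j \<le> (n + 2) ^ j" by (rule power_mono) simp_all
  finally have "j \<le> (n + 2) ^ j" .
  moreover have "n ^ j \<le> (n + 2) ^ j" by (rule power_mono) simp_all
  ultimately have "n ^ j + j \<le> 2 * (n + 2) ^ j" by linarith
  also have "\<dots> \<le> (n + 2) * (n + 2) ^ j" by (intro mult_right_mono) simp_all
  finally show ?thesis by (simp add: poly_bd_def)
qed

lemma mult_plus_two_le_power:
  assumes "m \<le> poly_bd j n"
  shows "m * n + 2 \<le> (n + 2) ^ (j + 2)"
proof -
  have "m * n + 2 \<le> (n + 2) ^ (j + 1) * n + 2"
    using le_trans[OF assms poly_bd_le_power] by (intro add_right_mono mult_right_mono) simp_all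
  also have "\<dots> \<le> (n + 2) ^ (j + 1) * n + (n + 2) ^ (j + 1) * 2"
    using one_le_power[of "n + 2" "j + 1"] by linarith
  also have "\<dots> = (n + 2) ^ (j + 2)" by (simp add: algebra_simps)
  finally show ?thesis .
qed

lemma power_plus_le_poly_bd: "\<exists>K. \<forall>n. (n + 2) ^ a + b \<le> poly_bd K n"
proof (intro exI allI)
  fix n :: nat
  define K where "K = 2 * a + 4 ^ a + b"
  show "(n + 2) ^ a + b \<le> poly_bd K n"
  proof (cases "n \<ge> 2")
    case True
    have "n + 2 \<le> n * n" using True mult_le_mono1[of 2 n n] by linarith
    then have "(n + 2) ^ a \<le> n ^ (2 * a)" by (metis power_mono power_mult power2_eq_square zero_le)
    also have "\<dots> \<le> n ^ K" using True by (intro power_increasing) (auto simp: K_def)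
    finally show ?thesis by (simp add: poly_bd_def K_def)
  next
    case False
    then have "(n + 2) ^ a \<le> 4 ^ a" by (intro power_mono) auto
    then show ?thesis by (simp add: poly_bd_def K_def)
  qed
qed

lemma poly_bd_of_mult_le: "\<exists>K. \<forall>m n. m \<le> poly_bd j n \<longrightarrow> poly_bd k (m * n) \<le> poly_bd K n"
proof -
  obtain K where K: "\<And>n. (n + 2) ^ ((j + 2) * k) + k \<le> poly_bd K n"
    using power_plus_le_poly_bd by blast
  have "poly_bd k (m * n) \<le> poly_bd K n" if "m \<le> poly_bd j n" for m n
  proof -
    have "(m * n) ^ k \<le> ((n + 2) ^ (j + 2)) ^ k"
      using mult_plus_two_le_power[OF that] by (intro power_mono) simp_all
    also have "\<dots> = (n + 2) ^ ((j + 2) * k)" by (rule power_mult[symmetric])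
    finally show ?thesis using K[of n] unfolding poly_bd_def by linarith
  qed
  then show ?thesis by blast
qed

lemma log_mult_le:
  assumes "m \<le> poly_bd j n"
  shows "log 2 (real (m * n) + 2) \<le> real (j + 2) * log 2 (real n + 2)"
proof -
  have "real (m * n + 2) \<le> real ((n + 2) ^ (j + 2))"
    using mult_plus_two_le_power[OF assms] by (simp only: of_nat_le_iff)
  then have "real (m * n) + 2 \<le> (real n + 2) ^ (j + 2)"
    by (simp only: of_nat_add of_nat_power of_nat_numeral)
  then have "log 2 (real (m * n) + 2) \<le> log 2 ((real n + 2) ^ (j + 2))"
    by (intro log_mono) (simp_all del: of_nat_mult)
  also have "\<dots> = real (j + 2) * log 2 (real n + 2)" by (rule log_nat_power) simp
  finally show ?thesis .
qed

lemma poly_bd_le_of_mult: "\<exists>K. \<forall>m n. n \<le> poly_bd j m \<longrightarrow> poly_bd k n \<le> poly_bd K (m * n)"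
proof -
  define K where "K = (j + 1) ^ k + k"
  have "poly_bd k n \<le> poly_bd K (m * n)" if n: "n \<le> poly_bd j m" for m n
  proof (cases "m = 0")
    case True
    then have "n \<le> j + 1" using n poly_bd_zero_le[of j] by simp
    then have "n ^ k \<le> (j + 1) ^ k" by (rule power_mono) simp
    then show ?thesis using True by (simp add: poly_bd_def K_def)
  next
    case False
    then show ?thesis by (intro poly_bd_mono) (auto simp: K_def)
  qed
  then show ?thesis by blast
qed

lemma log_le_of_mult:
  assumes "n \<le> poly_bd j m"
  shows "log 2 (real n + 2) \<le> log 2 (real j + 3) * log 2 (real (m * n) + 2)"
proof (cases "m = 0")
  case True
  then have "real n + 2 \<le> real j + 3" using assms poly_bd_zero_le[of j] by simp
  then show ?thesis using True by simp
next
  case False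
  then have "n \<le> m * n" by simp
  then have "real n + 2 \<le> real (m * n) + 2" by linarith
  then have "log 2 (real n + 2) \<le> log 2 (real (m * n) + 2)"
    by (subst log_le_cancel_iff) (auto simp del: of_nat_mult)
  also have "\<dots> \<le> log 2 (real j + 3) * log 2 (real (m * n) + 2)"
    using mult_right_mono[of 1 "log 2 (real j + 3)" "log 2 (real (m * n) + 2)"]
    by (simp del: of_nat_mult)
  finally show ?thesis .
qed

lemma mult_le_abs_mult:
  fixes c u v C :: real
  assumes "0 \<le> u" and "u \<le> C * v"
  shows "c * u \<le> \<bar>c\<bar> * C * v"
proof -
  have "c * u \<le> \<bar>c\<bar> * u" using assms(1) by (intro mult_right_mono) simp_all
  also have "\<dots> \<le> \<bar>c\<bar> * (C * v)" using assms(2) by (intro mult_left_mono) simp_all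
  finally show ?thesis by (simp add: mult.assoc)
qed

lemma computes_within_mono:
  "computes_within M x a y T S \<Longrightarrow> T \<le> T' \<Longrightarrow> S \<le> S' \<Longrightarrow> computes_within M x a y T' S'"
  unfolding computes_within_def by (metis order_trans)

lemma length_outp_step: "length (outp (step M x a c)) \<le> Suc (length (outp c))"
proof -
  obtain q' di da w dw oo
    where "delta M (st c) (rd x (ipos c)) (rd a (apos c)) (wtape c (wpos c)) = (q', di, da, w, dw, oo)"
    by (metis prod_cases6)
  then show ?thesis by (cases oo) (simp_all add: step_def)
qed

lemma length_outp_run: "length (outp (run M x a t)) \<le> t"
proof (induction t)
  case 0
  then show ?case by (simp add: run_def init_conf_def)
next
  case (Suc t)
  have "length (outp (run M x a (Suc t))) \<le> Suc (length (outp (run M x a t)))"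
    using length_outp_step by (simp add: run_def)
  then show ?case using Suc.IH by linarith
qed

lemma logspace_computable_poly_bounded:
  assumes "logspace_computable \<Sigma> m"
  obtains j where "\<And>x. x \<in> lists \<Sigma> \<Longrightarrow> m x \<le> poly_bd j (length x)"
proof -
  obtain M k c where M: "\<forall>x\<in>lists \<Sigma>. computes_within M x [] (replicate (m x) 1)
      (poly_bd k (length x)) (c * log 2 (real (length x) + 2))"
    using assms unfolding logspace_computable_def by blast
  have "m x \<le> poly_bd k (length x)" if x: "x \<in> lists \<Sigma>" for x
  proof -
    obtain t where "t \<le> poly_bd k (length x)" "outp (run M x [] t) = replicate (m x) 1"
      using M[rule_format, OF x] unfolding computes_within_def by blast
    then show ?thesis using length_outp_run[of M x "[]" t] by simp
  qed
  then show ?thesis by (rule that)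
qed

definition unary_length_tm :: "nat set \<Rightarrow> tm" where
  "unary_length_tm \<Sigma> = \<lparr>states = {0, 1}, alph = insert 1 \<Sigma>, start = 0, halt = 1,
     delta = (\<lambda>q a b c. case a of
         Sym s \<Rightarrow> (0, Rgt, Stay, Blk, Stay, Some 1)
       | LM \<Rightarrow> (0, Rgt, Stay, Blk, Stay, None)
       | _ \<Rightarrow> (1, Stay, Stay, Blk, Stay, None))\<rparr>"

lemma wf_unary_length_tm: "finite \<Sigma> \<Longrightarrow> wf_tm (unary_length_tm \<Sigma>)"
  unfolding wf_tm_def unary_length_tm_def by (auto split: sym.splits)

lemma run_unary_length_tm:
  assumes "t \<le> length x + 1"
  shows "st (run (unary_length_tm \<Sigma>) x a t) = 0 \<and>
    ipos (run (unary_length_tm \<Sigma>) x a t) = t \<and>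
    wpos (run (unary_length_tm \<Sigma>) x a t) = 0 \<and>
    outp (run (unary_length_tm \<Sigma>) x a t) = replicate (t - 1) 1"
  using assms
proof (induction t)
  case 0
  then show ?case by (simp add: run_def init_conf_def unary_length_tm_def)
next
  case (Suc t)
  have run_Suc: "run (unary_length_tm \<Sigma>) x a (Suc t)
      = step (unary_length_tm \<Sigma>) x a (run (unary_length_tm \<Sigma>) x a t)"
    by (simp add: run_def)
  show ?case
  proof (cases "t = 0")
    case True
    then show ?thesis
      unfolding run_Suc step_def using Suc by (simp add: unary_length_tm_def rd_def)
  next
    case False
    then have "rd x t = Sym (x ! (t - 1))" using Suc.prems by (simp add: rd_def)
    moreover have "replicate (t - 1) (1::nat) @ [1] = replicate (Suc t - 1) 1"
      using False by (cases t) (auto simp: replicate_append_same)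
    ultimately show ?thesis
      unfolding run_Suc step_def using Suc by (simp add: unary_length_tm_def)
  qed
qed

lemma logspace_computable_length:
  assumes "finite \<Sigma>"
  shows "logspace_computable \<Sigma> length"
  unfolding logspace_computable_def
proof (intro exI[of _ "unary_length_tm \<Sigma>"] exI[of _ "2::nat"] exI[of _ "1::real"] conjI ballI)
  show "wf_tm (unary_length_tm \<Sigma>)" using assms by (rule wf_unary_length_tm)
  show "\<Sigma> \<subseteq> alph (unary_length_tm \<Sigma>)" by (auto simp: unary_length_tm_def)
  fix x :: "nat list"
  let ?M = "unary_length_tm \<Sigma>" and ?n = "length x"
  have before_marker: "st (run ?M x [] (?n + 1)) = 0 \<and> ipos (run ?M x [] (?n + 1)) = ?n + 1 \<and>
      wpos (run ?M x [] (?n + 1)) = 0 \<and> outp (run ?M x [] (?n + 1)) = replicate ?n 1"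
    using run_unary_length_tm[of "?n + 1" x \<Sigma> "[]"] by simp
  have "run ?M x [] (?n + 2) = step ?M x [] (run ?M x [] (?n + 1))" by (simp add: run_def)
  then have halted: "st (run ?M x [] (?n + 2)) = 1 \<and> outp (run ?M x [] (?n + 2)) = replicate ?n 1 \<and>
      wpos (run ?M x [] (?n + 2)) = 0"
    unfolding step_def using before_marker by (simp add: unary_length_tm_def rd_def)
  have "wpos (run ?M x [] s) = 0" if "s \<le> ?n + 2" for s
    using that halted run_unary_length_tm[of s x \<Sigma> "[]"] by (cases "s = ?n + 2") auto
  moreover have "?n + 2 \<le> poly_bd 2 ?n"
    using le_square[of ?n] by (simp add: poly_bd_def power2_eq_square)
  moreover have "1 \<le> log 2 (real ?n + 2)" by simp
  ultimately show "computes_within ?M x [] (replicate ?n 1) (poly_bd 2 ?n) (1 * log 2 (real ?n + 2))"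
    unfolding computes_within_def using halted
    by (intro exI[of _ "?n + 2"]) (auto simp: unary_length_tm_def)
qed

lemma para_FL_poly_imp_FL_poly:
  assumes "para_FL_poly \<Sigma> f m"
  shows "FL_poly \<Sigma> f"
proof -
  obtain M h k c where M: "wf_tm M" "\<Sigma> \<subseteq> alph M" "\<forall>n. set (h n) \<subseteq> alph M"
    and H: "\<forall>x\<in>lists \<Sigma>. length (h (length x)) \<le> poly_bd k (m x * length x) \<and>
      computes_within M x (h (length x)) (f x)
        (poly_bd k (m x * length x)) (c * log 2 (real (m x * length x) + 2))"
    and m: "logspace_computable \<Sigma> m"
    using assms unfolding para_FL_poly_def by blast
  obtain j where j: "\<And>x. x \<in> lists \<Sigma> \<Longrightarrow> m x \<le> poly_bd j (length x)"
    using logspace_computable_poly_bounded[OF m] by blast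
  obtain K where K: "\<forall>m n. m \<le> poly_bd j n \<longrightarrow> poly_bd k (m * n) \<le> poly_bd K n"
    using poly_bd_of_mult_le by blast
  have time: "poly_bd k (m x * length x) \<le> poly_bd K (length x)" if "x \<in> lists \<Sigma>" for x
    using K j[OF that] by blast
  have space: "c * log 2 (real (m x * length x) + 2)
      \<le> \<bar>c\<bar> * real (j + 2) * log 2 (real (length x) + 2)" if "x \<in> lists \<Sigma>" for x
    using log_mult_le[OF j[OF that]] by (intro mult_le_abs_mult) (simp_all del: of_nat_mult)
  \<comment> \<open>para-FL/poly bounds the advice only at lengths of strings over \<open>\<Sigma>\<close>,
    FL/poly at every length.\<close>
  define h' where "h' n = (if \<exists>x\<in>lists \<Sigma>. length x = n then h n else [])" for n
  show ?thesis unfolding FL_poly_def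
  proof (intro exI[of _ M] exI[of _ h'] exI[of _ K] exI[of _ "\<bar>c\<bar> * real (j + 2)"] conjI allI ballI)
    show "wf_tm M" "\<Sigma> \<subseteq> alph M" using M by auto
    fix n
    show "set (h' n) \<subseteq> alph M" using M by (auto simp: h'_def)
    show "length (h' n) \<le> poly_bd K n"
    proof (cases "\<exists>x\<in>lists \<Sigma>. length x = n")
      case True
      then obtain x where x: "x \<in> lists \<Sigma>" and n: "n = length x" by blast
      have "length (h n) \<le> poly_bd k (m x * n)" using H x n by blast
      also have "\<dots> \<le> poly_bd K n" using time[OF x] n by simp
      finally show ?thesis using True by (simp add: h'_def)
    qed (simp add: h'_def)
  next
    fix x assume x: "x \<in> lists \<Sigma>"
    then have "h' (length x) = h (length x)" by (auto simp: h'_def)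
    then show "computes_within M x (h' (length x)) (f x) (poly_bd K (length x))
        (\<bar>c\<bar> * real (j + 2) * log 2 (real (length x) + 2))"
      using H time[OF x] space[OF x] x by (auto intro: computes_within_mono)
  qed
qed

lemma FL_poly_imp_para_FL_poly:
  assumes "FL_poly \<Sigma> f" and "logspace_computable \<Sigma> m"
    and honest: "\<And>x. x \<in> lists \<Sigma> \<Longrightarrow> length x \<le> poly_bd j (m x)"
  shows "para_FL_poly \<Sigma> f m"
proof -
  obtain M h k c where M: "wf_tm M" "\<Sigma> \<subseteq> alph M"
    and h: "\<forall>n. set (h n) \<subseteq> alph M \<and> length (h n) \<le> poly_bd k n"
    and H: "\<forall>x\<in>lists \<Sigma>. computes_within M x (h (length x)) (f x)
      (poly_bd k (length x)) (c * log 2 (real (length x) + 2))"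
    using assms(1) unfolding FL_poly_def by blast
  obtain K where K: "\<forall>m n. n \<le> poly_bd j m \<longrightarrow> poly_bd k n \<le> poly_bd K (m * n)"
    using poly_bd_le_of_mult by blast
  have time: "poly_bd k (length x) \<le> poly_bd K (m x * length x)" if "x \<in> lists \<Sigma>" for x
    using K honest[OF that] by blast
  have space: "c * log 2 (real (length x) + 2)
      \<le> \<bar>c\<bar> * log 2 (real j + 3) * log 2 (real (m x * length x) + 2)" if "x \<in> lists \<Sigma>" for x
    using log_le_of_mult[OF honest[OF that]] by (intro mult_le_abs_mult) simp_all
  show ?thesis unfolding para_FL_poly_def
  proof (intro exI[of _ M] exI[of _ h] exI[of _ K] exI[of _ "\<bar>c\<bar> * log 2 (real j + 3)"]
      conjI allI ballI)
    show "logspace_computable \<Sigma> m" by (rule assms(2))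
    show "wf_tm M" "\<Sigma> \<subseteq> alph M" using M by auto
    show "set (h n) \<subseteq> alph M" for n using h by blast
  next
    fix x assume x: "x \<in> lists \<Sigma>"
    show "length (h (length x)) \<le> poly_bd K (m x * length x)"
      using h time[OF x] by (metis order_trans)
    show "computes_within M x (h (length x)) (f x) (poly_bd K (m x * length x))
        (\<bar>c\<bar> * log 2 (real j + 3) * log 2 (real (m x * length x) + 2))"
      using H x time[OF x] space[OF x] by (auto intro: computes_within_mono)
  qed
qed

lemma para_LOGCFL_poly_imp_LOGCFL_poly:
  "(\<Sigma>, L, m) \<in> para_LOGCFL_poly \<Longrightarrow> (\<Sigma>, L) \<in> LOGCFL_poly"
  unfolding para_LOGCFL_poly_def LOGCFL_poly_def by (blast dest: para_FL_poly_imp_FL_poly)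

lemma para_LOGDCFL_poly_imp_LOGDCFL_poly:
  "(\<Sigma>, L, m) \<in> para_LOGDCFL_poly \<Longrightarrow> (\<Sigma>, L) \<in> LOGDCFL_poly"
  unfolding para_LOGDCFL_poly_def LOGDCFL_poly_def by (blast dest: para_FL_poly_imp_FL_poly)

lemma LOGCFL_poly_imp_para_LOGCFL_poly:
  assumes "(\<Sigma>, L) \<in> LOGCFL_poly" and "logspace_computable \<Sigma> m" and "(\<Sigma>, L, m) \<in> PHSP"
  shows "(\<Sigma>, L, m) \<in> para_LOGCFL_poly"
proof -
  obtain f B where "finite \<Sigma>" "L \<subseteq> lists \<Sigma>" "FL_poly \<Sigma> f" "is_cfl B"
    and "\<forall>x\<in>lists \<Sigma>. x \<in> L \<longleftrightarrow> f x \<in> B"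
    using assms(1) unfolding LOGCFL_poly_def by blast
  moreover obtain j where "\<forall>x\<in>lists \<Sigma>. length x \<le> poly_bd j (m x)"
    using assms(3) unfolding PHSP_def by blast
  ultimately have "para_FL_poly \<Sigma> f m" "L = {x \<in> lists \<Sigma>. f x \<in> B}"
    using FL_poly_imp_para_FL_poly[OF _ assms(2)] by blast+
  then show ?thesis
    unfolding para_LOGCFL_poly_def using \<open>finite \<Sigma>\<close> \<open>L \<subseteq> lists \<Sigma>\<close> \<open>is_cfl B\<close> by blast
qed

lemma LOGDCFL_poly_imp_para_LOGDCFL_poly:
  assumes "(\<Sigma>, L) \<in> LOGDCFL_poly" and "logspace_computable \<Sigma> m" and "(\<Sigma>, L, m) \<in> PHSP"
  shows "(\<Sigma>, L, m) \<in> para_LOGDCFL_poly"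
proof -
  obtain f B where "finite \<Sigma>" "L \<subseteq> lists \<Sigma>" "FL_poly \<Sigma> f" "is_dcfl B"
    and "\<forall>x\<in>lists \<Sigma>. x \<in> L \<longleftrightarrow> f x \<in> B"
    using assms(1) unfolding LOGDCFL_poly_def by blast
  moreover obtain j where "\<forall>x\<in>lists \<Sigma>. length x \<le> poly_bd j (m x)"
    using assms(3) unfolding PHSP_def by blast
  ultimately have "para_FL_poly \<Sigma> f m" "L = {x \<in> lists \<Sigma>. f x \<in> B}"
    using FL_poly_imp_para_FL_poly[OF _ assms(2)] by blast+
  then show ?thesis
    unfolding para_LOGDCFL_poly_def using \<open>finite \<Sigma>\<close> \<open>L \<subseteq> lists \<Sigma>\<close> \<open>is_dcfl B\<close> by blast
qed

lemma length_in_PHSP: "(\<Sigma>, L, length) \<in> PHSP"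
  unfolding PHSP_def by (auto intro: exI[of _ 1] simp: poly_bd_def)

lemma logspace_computable_size_parameter:
  "(\<Sigma>, L, m) \<in> para_LOGCFL_poly \<Longrightarrow> logspace_computable \<Sigma> m"
  unfolding para_LOGCFL_poly_def para_FL_poly_def by blast

theorem proposition3p3:
  shows "para_LOGCFL_poly \<inter> PHSP \<subseteq> para_LOGDCFL_poly \<longleftrightarrow> LOGCFL_poly \<subseteq> LOGDCFL_poly"
proof
  assume para: "para_LOGCFL_poly \<inter> PHSP \<subseteq> para_LOGDCFL_poly"
  show "LOGCFL_poly \<subseteq> LOGDCFL_poly"
  proof safe
    fix \<Sigma> L assume L: "(\<Sigma>, L) \<in> LOGCFL_poly"
    then have "logspace_computable \<Sigma> length"
      by (simp add: LOGCFL_poly_def logspace_computable_length)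
    then have "(\<Sigma>, L, length) \<in> para_LOGCFL_poly \<inter> PHSP"
      using L length_in_PHSP LOGCFL_poly_imp_para_LOGCFL_poly by blast
    then show "(\<Sigma>, L) \<in> LOGDCFL_poly"
      using para para_LOGDCFL_poly_imp_LOGDCFL_poly by blast
  qed
next
  assume nonpara: "LOGCFL_poly \<subseteq> LOGDCFL_poly"
  show "para_LOGCFL_poly \<inter> PHSP \<subseteq> para_LOGDCFL_poly"
  proof safe
    fix \<Sigma> L m assume "(\<Sigma>, L, m) \<in> para_LOGCFL_poly" and "(\<Sigma>, L, m) \<in> PHSP"
    then show "(\<Sigma>, L, m) \<in> para_LOGDCFL_poly"
      using nonpara para_LOGCFL_poly_imp_LOGCFL_poly logspace_computable_size_parameter
        LOGDCFL_poly_imp_para_LOGDCFL_poly by blast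
  qed
qed

end
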